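(* For real numbers $\epsilon_1,\epsilon_2\ge 0$ let \[ D_{\epsilon_1,\epsilon_2}=\begin{bmatrix}0&4&0\\2&0&4+\epsilon_1\\3&2+\epsilon_2&0\end{bmatrix}. \] There exists $\delta>0$ such that for all $\epsilon_1,\epsilon_2,\epsilon_1',\epsilon_2'\in[0,\delta]$, the bimatrix game $(D_{\epsilon_1,\epsilon_2},D_{\epsilon_1',\epsilon_2'}^T)$ has exactly one Nash equilibrium; this equilibrium has full support (both players assign positive probability to all three pure strategies); and if $(\epsilon_1,\epsilon_2)=(\epsilon_1',\epsilon_2')$ then this equilibrium is symmetric.
   Context: A bimatrix game $(A,B)$ with $m\times n$ real payoff matrices: the first player chooses a mixed strategy $\mathbf{x}\in\Delta_m=\{\mathbf{x}\in\mathbb{R}^m:\mathbf{x}\ge 0,\sum_i x_i=1\}$, the second $\mathbf{y}\in\Delta_n$; payoffs are $\mathbf{x}^TA\mathbf{y}$ and $\mathbf{x}^TB\mathbf{y}$. $(\mathbf{x},\mathbf{y})$ is a Nash equilibrium (NE) if neither player can increase her payoff by unilaterally changing her mixed strategy. A NE $(\mathbf{x},\mathbf{y})$ is symmetric if $\mathbf{x}=\mathbf{y}$. *)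

theory Defs
  imports "HOL-Analysis.Analysis"
begin

definition mixed_strategies :: "(real ^ 'n) set" where
  "mixed_strategies = {x. (\<forall>i. 0 \<le> x $ i) \<and> (\<Sum>i\<in>UNIV. x $ i) = 1}"

definition nash_equilibrium ::
  "real ^ 'n ^ 'm \<Rightarrow> real ^ 'n ^ 'm \<Rightarrow> real ^ 'm \<Rightarrow> real ^ 'n \<Rightarrow> bool" where
  "nash_equilibrium A B x y \<longleftrightarrow>
     x \<in> mixed_strategies \<and> y \<in> mixed_strategies \<and>
     (\<forall>x'\<in>mixed_strategies. x' \<bullet> (A *v y) \<le> x \<bullet> (A *v y)) \<and>
     (\<forall>y'\<in>mixed_strategies. x \<bullet> (B *v y') \<le> x \<bullet> (B *v y))"

definition D :: "real \<Rightarrow> real \<Rightarrow> real ^ 3 ^ 3" where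
  "D e1 e2 = vector [vector [0, 4, 0],
                     vector [2, 0, 4 + e1],
                     vector [3, 2 + e2, 0]]"

end

theory Submission
  imports Defs
begin

text \<open>A mixed strategy is a best response exactly when every pure strategy in its support
  attains the maximal payoff. For perturbations of size at most \<open>1/100\<close>, a case analysis over
  all possible supports shows that every equilibrium has full support, so each player's strategy
  makes the opponent's three pure payoffs equal. For \<open>D p q\<close> these indifference equations have
  the unique solution proportional to \<open>((2 - q)(4 + p), 3(4 + p), 8 + 2q)\<close>; hence the equilibrium
  is unique, strictly positive, and symmetric when both players face the same perturbation.\<close>

lemma axis_mixed_strategy: "(axis i 1 :: real ^ 'n) \<in> mixed_strategies"
  by (simp add: mixed_strategies_def axis_def)

lemma mixed_strategy_inner_le:
  assumes "x \<in> mixed_strategies" and "\<And>i. u $ i \<le> c"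
  shows "x \<bullet> u \<le> c"
proof -
  have "x \<bullet> u = (\<Sum>i\<in>UNIV. x $ i * u $ i)"
    by (simp add: inner_vec_def)
  also have "\<dots> \<le> (\<Sum>i\<in>UNIV. x $ i * c)"
    using assms by (intro sum_mono mult_left_mono) (auto simp: mixed_strategies_def)
  also have "\<dots> = c"
    using assms(1) by (simp add: mixed_strategies_def flip: sum_distrib_right)
  finally show ?thesis .
qed

lemma mixed_strategy_inner_const:
  assumes "x \<in> mixed_strategies" and "\<And>i. u $ i = c"
  shows "x \<bullet> u = c"
  using assms(1) by (simp add: inner_vec_def assms(2) mixed_strategies_def flip: sum_distrib_right)

lemma best_response_iff_pure_best_responses:
  assumes "x \<in> mixed_strategies"
  shows "(\<forall>x'\<in>mixed_strategies. x' \<bullet> u \<le> x \<bullet> u) \<longleftrightarrow> (\<forall>i. u $ i \<le> x \<bullet> u)"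
  using axis_mixed_strategy mixed_strategy_inner_le
  by (metis cart_eq_inner_axis inner_commute)

lemma best_response_support:
  assumes x: "x \<in> mixed_strategies" and best: "\<And>i. u $ i \<le> x \<bullet> u" and "0 < x $ i"
  shows "u $ i = x \<bullet> u"
proof -
  have "(\<Sum>j\<in>UNIV. x $ j * (x \<bullet> u - u $ j)) = (\<Sum>j\<in>UNIV. x $ j) * (x \<bullet> u) - x \<bullet> u"
    by (simp add: inner_vec_def algebra_simps sum_subtractf sum_distrib_right)
  also have "\<dots> = 0"
    using x by (simp add: mixed_strategies_def)
  finally have "\<forall>j. x $ j * (x \<bullet> u - u $ j) = 0"
    using x best by (subst (asm) sum_nonneg_eq_0_iff) (auto simp: mixed_strategies_def)
  then show ?thesis
    using \<open>0 < x $ i\<close> by (metis eq_iff_diff_eq_0 less_irrefl mult_eq_0_iff)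
qed

lemma nash_equilibrium_transpose_iff:
  "nash_equilibrium A (transpose B) x y \<longleftrightarrow>
     x \<in> mixed_strategies \<and> y \<in> mixed_strategies \<and>
     (\<forall>i. (A *v y) $ i \<le> x \<bullet> (A *v y)) \<and> (\<forall>j. (B *v x) $ j \<le> y \<bullet> (B *v x))"
proof -
  have "x \<bullet> (transpose B *v y') = y' \<bullet> (B *v x)" for y'
    by (metis dot_lmul_matrix inner_commute transpose_matrix_vector)
  then show ?thesis
    unfolding nash_equilibrium_def by (metis best_response_iff_pure_best_responses)
qed

lemma D_mult_vec:
  "(D p q *v y) $ 1 = 4 * y $ 2"
  "(D p q *v y) $ 2 = 2 * y $ 1 + (4 + p) * y $ 3"
  "(D p q *v y) $ 3 = 3 * y $ 1 + (2 + q) * y $ 2"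
  by (simp_all add: D_def matrix_vector_mult_def sum_3)

lemma mixed_strategy_3:
  "(x :: real ^ 3) \<in> mixed_strategies \<longleftrightarrow>
     0 \<le> x $ 1 \<and> 0 \<le> x $ 2 \<and> 0 \<le> x $ 3 \<and> x $ 1 + x $ 2 + x $ 3 = 1"
  by (simp add: mixed_strategies_def forall_3 sum_3)

text \<open>These weights solve \<open>4 y2 = 2 y1 + (4 + p) y3 = 3 y1 + (2 + q) y2\<close>.\<close>

definition equalizer_weights :: "real \<Rightarrow> real \<Rightarrow> real ^ 3" where
  "equalizer_weights p q = vector [(2 - q) * (4 + p), 3 * (4 + p), 8 + 2 * q]"

definition equalizer :: "real \<Rightarrow> real \<Rightarrow> real ^ 3" where
  "equalizer p q = inverse (\<Sum>i\<in>UNIV. equalizer_weights p q $ i) *\<^sub>R equalizer_weights p q"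

lemma equalizer_weights_pos:
  assumes "0 \<le> p" "0 \<le> q" "q \<le> 1"
  shows "0 < equalizer_weights p q $ i"
  using assms exhaust_3[of i] by (auto simp: equalizer_weights_def)

lemma equalizer_pos:
  assumes "0 \<le> p" "0 \<le> q" "q \<le> 1"
  shows "0 < equalizer p q $ i"
  using equalizer_weights_pos[OF assms]
  by (simp add: equalizer_def sum_pos)

lemma equalizer_mixed_strategy:
  assumes "0 \<le> p" "0 \<le> q" "q \<le> 1"
  shows "equalizer p q \<in> mixed_strategies"
proof -
  have "0 < (\<Sum>i\<in>UNIV. equalizer_weights p q $ i)"
    using equalizer_weights_pos[OF assms] by (simp add: sum_pos)
  then show ?thesis
    using equalizer_pos[OF assms]
    by (simp add: mixed_strategies_def less_imp_le equalizer_def flip: sum_distrib_left)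
qed

lemma D_mult_equalizer:
  "(D p q *v equalizer p q) $ i = 12 * (4 + p) / (\<Sum>j\<in>UNIV. equalizer_weights p q $ j)"
proof -
  have "(D p q *v equalizer_weights p q) $ i = 12 * (4 + p)"
    using exhaust_3[of i] by (auto simp: D_mult_vec equalizer_weights_def algebra_simps)
  then show ?thesis
    by (simp add: equalizer_def matrix_vector_mult_scaleR divide_inverse mult.commute)
qed

lemma D_indifferent_imp_equalizer:
  assumes "0 \<le> p" "0 \<le> q" "q \<le> 1"
    and sum_y: "(\<Sum>i\<in>UNIV. y $ i) = 1"
    and indifferent: "\<And>i. (D p q *v y) $ i = c"
  shows "y = equalizer p q"
proof -
  define w where "w = equalizer_weights p q"
  have y1_eq: "3 * y $ 1 = (2 - q) * y $ 2"
    using indifferent[of 1] indifferent[of 3] by (simp add: D_mult_vec algebra_simps)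
  have "(4 + p) * y $ 3 = 4 * y $ 2 - 2 * y $ 1"
    using indifferent[of 1] indifferent[of 2] by (simp add: D_mult_vec)
  then have "3 * (4 + p) * y $ 3 = 12 * y $ 2 - 2 * (3 * y $ 1)"
    by (simp add: algebra_simps)
  then have y3_eq: "3 * (4 + p) * y $ 3 = (8 + 2 * q) * y $ 2"
    unfolding y1_eq by (simp add: algebra_simps)
  have proportional: "(3 * (4 + p)) *\<^sub>R y = y $ 2 *\<^sub>R w"
    using arg_cong[OF y1_eq, of "(*) (4 + p)"] y3_eq
    by (simp add: vec_eq_iff forall_3 w_def equalizer_weights_def algebra_simps)
  have "3 * (4 + p) = y $ 2 * (\<Sum>i\<in>UNIV. w $ i)"
    using arg_cong[OF proportional, of "\<lambda>v. \<Sum>i\<in>UNIV. v $ i"] sum_y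
    by (simp flip: sum_distrib_left)
  moreover have weights_pos: "0 < (\<Sum>i\<in>UNIV. w $ i)"
    using equalizer_weights_pos[OF assms(1-3)] by (simp add: w_def sum_pos)
  ultimately have "y $ 2 = 3 * (4 + p) / (\<Sum>i\<in>UNIV. w $ i)"
    by (simp add: field_simps)
  then have "y $ 2 / (3 * (4 + p)) = inverse (\<Sum>i\<in>UNIV. w $ i)"
    using \<open>0 \<le> p\<close> weights_pos by (simp add: field_simps)
  moreover have "y = (y $ 2 / (3 * (4 + p))) *\<^sub>R w"
    using arg_cong[OF proportional, of "scaleR (inverse (3 * (4 + p)))"] \<open>0 \<le> p\<close>
    by (simp add: divide_inverse mult.commute)
  ultimately show ?thesis
    by (simp add: equalizer_def w_def)
qed

text \<open>The variables \<open>a, b, c, d\<close> stand for the perturbation terms \<open>e1 y3, e2 y2, f1 x3, f2 x2\<close>,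
  which keeps the system linear; each of the \<open>2^6\<close> choices among the complementary-slackness
  disjunctions is then refuted by linear arithmetic unless all supports are full.\<close>

lemma perturbed_slackness_system_full_support:
  fixes x1 x2 x3 y1 y2 y3 a b c d s t :: real
  assumes "0 \<le> x1" "0 \<le> x2" "0 \<le> x3" "x1 + x2 + x3 = 1"
    and "0 \<le> y1" "0 \<le> y2" "0 \<le> y3" "y1 + y2 + y3 = 1"
    and "0 \<le> a" "a \<le> y3 / 100" "0 \<le> b" "b \<le> y2 / 100"
    and "0 \<le> c" "c \<le> x3 / 100" "0 \<le> d" "d \<le> x2 / 100"
    and "4 * y2 \<le> s" "2 * y1 + 4 * y3 + a \<le> s" "3 * y1 + 2 * y2 + b \<le> s"
    and "x1 = 0 \<or> 4 * y2 = s" "x2 = 0 \<or> 2 * y1 + 4 * y3 + a = s" "x3 = 0 \<or> 3 * y1 + 2 * y2 + b = s"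
    and "4 * x2 \<le> t" "2 * x1 + 4 * x3 + c \<le> t" "3 * x1 + 2 * x2 + d \<le> t"
    and "y1 = 0 \<or> 4 * x2 = t" "y2 = 0 \<or> 2 * x1 + 4 * x3 + c = t" "y3 = 0 \<or> 3 * x1 + 2 * x2 + d = t"
  shows "0 < x1 \<and> 0 < x2 \<and> 0 < x3 \<and> 0 < y1 \<and> 0 < y2 \<and> 0 < y3"
proof -
  have "0 < x1" using assms by (elim disjE; linarith)
  moreover have "0 < x2" using assms by (elim disjE; linarith)
  moreover have "0 < x3" using assms by (elim disjE; linarith)
  moreover have "0 < y1" using assms by (elim disjE; linarith)
  moreover have "0 < y2" using assms by (elim disjE; linarith)
  moreover have "0 < y3" using assms by (elim disjE; linarith)
  ultimately show ?thesis by blast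
qed

lemma D_equilibrium_full_support:
  assumes small: "e1 \<in> {0..1/100}" "e2 \<in> {0..1/100}" "f1 \<in> {0..1/100}" "f2 \<in> {0..1/100}"
    and ne: "nash_equilibrium (D e1 e2) (transpose (D f1 f2)) x y"
  shows "(\<forall>i. 0 < x $ i) \<and> (\<forall>j. 0 < y $ j)"
proof -
  define u where "u = D e1 e2 *v y"
  define v where "v = D f1 f2 *v x"
  have x: "x \<in> mixed_strategies" and y: "y \<in> mixed_strategies"
    and best_x: "\<And>i. u $ i \<le> x \<bullet> u" and best_y: "\<And>j. v $ j \<le> y \<bullet> v"
    using ne unfolding nash_equilibrium_transpose_iff u_def v_def by auto
  have slack_x: "x $ i = 0 \<or> u $ i = x \<bullet> u" for i
    using best_response_support[OF x best_x] x by (auto simp: mixed_strategies_def less_le)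
  have slack_y: "y $ j = 0 \<or> v $ j = y \<bullet> v" for j
    using best_response_support[OF y best_y] y by (auto simp: mixed_strategies_def less_le)
  have u: "u $ 1 = 4 * y $ 2" "u $ 2 = 2 * y $ 1 + 4 * y $ 3 + e1 * y $ 3"
      "u $ 3 = 3 * y $ 1 + 2 * y $ 2 + e2 * y $ 2"
    and v: "v $ 1 = 4 * x $ 2" "v $ 2 = 2 * x $ 1 + 4 * x $ 3 + f1 * x $ 3"
      "v $ 3 = 3 * x $ 1 + 2 * x $ 2 + f2 * x $ 2"
    unfolding u_def v_def D_mult_vec by (simp_all add: algebra_simps)
  have X: "0 \<le> x $ 1" "0 \<le> x $ 2" "0 \<le> x $ 3" "x $ 1 + x $ 2 + x $ 3 = 1"
    and Y: "0 \<le> y $ 1" "0 \<le> y $ 2" "0 \<le> y $ 3" "y $ 1 + y $ 2 + y $ 3 = 1"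
    using x y by (simp_all add: mixed_strategy_3)
  have small_term: "e * z \<le> z / 100" if "e \<in> {0..1/100}" "0 \<le> z" for e z :: real
    using mult_right_mono[of e "1/100" z] that by simp
  note small_term[OF small(1) Y(3)] small_term[OF small(2) Y(2)]
    small_term[OF small(3) X(3)] small_term[OF small(4) X(2)]
  then have "0 < x $ 1 \<and> 0 < x $ 2 \<and> 0 < x $ 3 \<and> 0 < y $ 1 \<and> 0 < y $ 2 \<and> 0 < y $ 3"
    using small X Y best_x[of 1] best_x[of 2] best_x[of 3] best_y[of 1] best_y[of 2] best_y[of 3]
      slack_x[of 1] slack_x[of 2] slack_x[of 3] slack_y[of 1] slack_y[of 2] slack_y[of 3]
    unfolding u v
    by (intro perturbed_slackness_system_full_support[where s = "x \<bullet> u" and t = "y \<bullet> v"]) simp_all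
  then show ?thesis
    by (simp add: forall_3)
qed

lemma D_game_nash_equilibrium_iff:
  assumes small: "e1 \<in> {0..1/100}" "e2 \<in> {0..1/100}" "f1 \<in> {0..1/100}" "f2 \<in> {0..1/100}"
  shows "nash_equilibrium (D e1 e2) (transpose (D f1 f2)) x y \<longleftrightarrow>
    x = equalizer f1 f2 \<and> y = equalizer e1 e2"
proof
  assume ne: "nash_equilibrium (D e1 e2) (transpose (D f1 f2)) x y"
  then have x: "x \<in> mixed_strategies" and y: "y \<in> mixed_strategies"
    and best_x: "\<And>i. (D e1 e2 *v y) $ i \<le> x \<bullet> (D e1 e2 *v y)"
    and best_y: "\<And>j. (D f1 f2 *v x) $ j \<le> y \<bullet> (D f1 f2 *v x)"
    unfolding nash_equilibrium_transpose_iff by auto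
  have full: "\<And>i. 0 < x $ i" "\<And>j. 0 < y $ j"
    using D_equilibrium_full_support[OF small ne] by auto
  have "y = equalizer e1 e2"
    using small y best_response_support[OF x best_x full(1)]
    by (intro D_indifferent_imp_equalizer) (auto simp: mixed_strategies_def)
  moreover have "x = equalizer f1 f2"
    using small x best_response_support[OF y best_y full(2)]
    by (intro D_indifferent_imp_equalizer) (auto simp: mixed_strategies_def)
  ultimately show "x = equalizer f1 f2 \<and> y = equalizer e1 e2"
    by blast
next
  assume "x = equalizer f1 f2 \<and> y = equalizer e1 e2"
  then have x: "x \<in> mixed_strategies" and y: "y \<in> mixed_strategies"
    and "\<And>i. (D e1 e2 *v y) $ i = 12 * (4 + e1) / (\<Sum>j\<in>UNIV. equalizer_weights e1 e2 $ j)"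
    and "\<And>j. (D f1 f2 *v x) $ j = 12 * (4 + f1) / (\<Sum>i\<in>UNIV. equalizer_weights f1 f2 $ i)"
    using small by (auto intro: equalizer_mixed_strategy simp: D_mult_equalizer)
  then show "nash_equilibrium (D e1 e2) (transpose (D f1 f2)) x y"
    unfolding nash_equilibrium_transpose_iff by (simp add: mixed_strategy_inner_const)
qed

theorem lemma3p2:
  shows "\<exists>\<delta>>0. \<forall>e1 e2 e1' e2'.
     e1 \<in> {0..\<delta>} \<and> e2 \<in> {0..\<delta>} \<and> e1' \<in> {0..\<delta>} \<and> e2' \<in> {0..\<delta>} \<longrightarrow>
     (\<exists>!(x, y). nash_equilibrium (D e1 e2) (transpose (D e1' e2')) x y) \<and>
     (\<forall>x y. nash_equilibrium (D e1 e2) (transpose (D e1' e2')) x y \<longrightarrow>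
        (\<forall>i. x $ i > 0) \<and> (\<forall>j. y $ j > 0) \<and>
        ((e1, e2) = (e1', e2') \<longrightarrow> x = y))"
proof -
  have "(\<exists>!(x, y). nash_equilibrium (D e1 e2) (transpose (D e1' e2')) x y) \<and>
     (\<forall>x y. nash_equilibrium (D e1 e2) (transpose (D e1' e2')) x y \<longrightarrow>
        (\<forall>i. x $ i > 0) \<and> (\<forall>j. y $ j > 0) \<and> ((e1, e2) = (e1', e2') \<longrightarrow> x = y))"
    if small: "e1 \<in> {0..1/100}" "e2 \<in> {0..1/100}" "e1' \<in> {0..1/100}" "e2' \<in> {0..1/100}"
    for e1 e2 e1' e2' :: real
  proof -
    note equilibria = D_game_nash_equilibrium_iff[OF small]
    have "\<exists>!(x, y). nash_equilibrium (D e1 e2) (transpose (D e1' e2')) x y"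
      unfolding equilibria by (rule ex1I[of _ "(equalizer e1' e2', equalizer e1 e2)"]) auto
    moreover have "\<forall>i. 0 < equalizer p q $ i" if "p \<in> {0..1/100}" "q \<in> {0..1/100}" for p q
      using that by (auto intro: equalizer_pos)
    ultimately show ?thesis
      using small by (auto simp: equilibria)
  qed
  then show ?thesis
    by (intro exI[of _ "1/100"]) auto
qed

end
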